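(* Let $p\ge3$, $G\in\mathbb{Q}_p[\![x]\!]$, and let $M$ be the (finite) length of the slope $\le-1$ part of the Newton polygon of $G$. Suppose $M>1$ and $i\le M$ is an integer with $v(C_i(G))\le v(C_M(G))+v(M!/i!)$. Then $i\ge\kappa_p^{-1}M$.
   Context: $v$ is the $p$-adic valuation, $C_i(G)$ the $x^i$-coefficient of $G$. The Newton polygon of $G$ is the lower convex hull of the points $(i,v(C_i(G)))$ with $C_i(G)\ne0$; the slope $\le-1$ part is the initial portion consisting of segments of slope $\le -1$, and its length $M$ is the $x$-coordinate of its right endpoint (so $(M,v(C_M(G)))$ lies on the polygon and $v(C_i(G))\ge v(C_M(G))+(M-i)$ for all $i<M$). $\kappa_p=1+\frac{p-1}{p-2}\cdot\frac{1}{\log p}$. *)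

theory Defs
  imports "HOL-Analysis.Analysis" "HOL-Computational_Algebra.Computational_Algebra"
begin

text \<open>
  We model a power series
  G = sum C_i x^i as a formal power series over an arbitrary field 'a together with
  an arbitrary integer-valued function v on the nonzero coefficients (for Q_p this is
  the p-adic valuation; the value infinity of v(0) is handled by only looking at
  nonzero coefficients).  The statement only depends on the values v(C_i G), and every
  integer sequence is realised by p-adic valuations of Q_p-coefficients, so this
  covers the Q_p case.
\<close>

definition vfact_quot :: "nat \<Rightarrow> nat \<Rightarrow> nat \<Rightarrow> int" where
  "vfact_quot p M i = int (multiplicity p (fact M :: nat)) - int (multiplicity p (fact i :: nat))"

definition kappa :: "nat \<Rightarrow> real" where
  "kappa p = 1 + (real p - 1) / (real p - 2) * (1 / ln (real p))"

text \<open>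
  The Newton polygon of G is the lower convex hull of the points (i, v(C_i G)),
  C_i G \<noteq> 0.  Its slope \<le> -1 part ends at the rightmost point where the supporting
  line of slope -1 touches the polygon, i.e. at the largest index minimising
  v(C_i G) + i.  \<open>np_slope_le_m1_length v G M\<close> says that this part has finite
  length M: (M, v(C_M G)) is a point of the polygon with v(C_i G) \<ge> v(C_M G) + (M - i)
  for all i (in particular all i < M), and the polygon has slope > -1 after M.
\<close>
definition np_slope_le_m1_length :: "('a::zero \<Rightarrow> int) \<Rightarrow> 'a fps \<Rightarrow> nat \<Rightarrow> bool" where
  "np_slope_le_m1_length v G M \<longleftrightarrow>
     fps_nth G M \<noteq> 0 \<and>
     (\<forall>j. fps_nth G j \<noteq> 0 \<longrightarrow> v (fps_nth G M) + int M \<le> v (fps_nth G j) + int j) \<and>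
     (\<forall>j>M. fps_nth G j \<noteq> 0 \<longrightarrow> v (fps_nth G M) + int M < v (fps_nth G j) + int j)"

end

theory Submission
  imports Defs
begin

text \<open>
  The slope condition at M gives M - i \<le> v(C_i G) - v(C_M G) \<le> v_p(M!/i!) \<le> v_p(M!), and Legendre's
  formula bounds v_p(M!) \<le> (M - 1)/(p - 1).  Hence (p - 2) M \<le> (p - 1) i, and
  (p - 1)/(p - 2) \<le> \<kappa>_p because ln p \<le> p - 1.
\<close>

lemma multiplicity_fact_Suc:
  assumes "prime (p::nat)"
  shows "multiplicity p (fact (Suc n) :: nat) = multiplicity p (Suc n) + multiplicity p (fact n :: nat)"
  unfolding fact_Suc of_nat_id
  by (rule prime_elem_multiplicity_mult_distrib) (auto simp: assms prime_imp_prime_elem)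

lemma multiplicity_fact_div:
  assumes p: "prime (p::nat)"
  shows "multiplicity p (fact n :: nat) = n div p + multiplicity p (fact (n div p) :: nat)"
proof (induction n)
  case 0
  then show ?case by simp
next
  case (Suc n)
  note step = multiplicity_fact_Suc[OF p]
  show ?case
  proof (cases "p dvd Suc n")
    case False
    then have "multiplicity p (Suc n) = 0" and "Suc n div p = n div p"
      by (simp_all add: not_dvd_imp_multiplicity_0 div_Suc dvd_eq_mod_eq_0)
    then show ?thesis using step Suc.IH by simp
  next
    case True
    define q where "q = n div p"
    have "Suc n div p = Suc q"
      using True by (simp add: div_Suc q_def)
    then have "Suc n = p * Suc q"
      using True by (metis dvd_mult_div_cancel)
    have "multiplicity p (Suc n) = Suc (multiplicity p (Suc q))"
      unfolding \<open>Suc n = p * Suc q\<close> using p by (intro multiplicity_times_same) auto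
    then show ?thesis
      using step[of n] step[of q] Suc.IH \<open>Suc n div p = Suc q\<close> by (simp add: q_def)
  qed
qed

lemma multiplicity_fact_le:
  assumes p: "prime (p::nat)" and "n \<ge> 1"
  shows "(p - 1) * multiplicity p (fact n :: nat) \<le> n - 1"
  using assms(2)
proof (induction n rule: less_induct)
  case (less n)
  define q where "q = n div p"
  have rec: "multiplicity p (fact n :: nat) = q + multiplicity p (fact q :: nat)"
    unfolding q_def by (rule multiplicity_fact_div[OF p])
  show ?case
  proof (cases "q = 0")
    case True
    then show ?thesis using rec by simp
  next
    case False
    have p1: "p > 1" using p prime_gt_1_nat by blast
    have "q < n" using p1 less.prems q_def by simp
    then have IH: "(p - 1) * multiplicity p (fact q :: nat) \<le> q - 1"
      using less.IH False by simp
    have "(p - 1) * multiplicity p (fact n :: nat) = (p - 1) * q + (p - 1) * multiplicity p (fact q :: nat)"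
      using rec by (simp add: algebra_simps)
    also have "\<dots> \<le> (p - 1) * q + (q - 1)" using IH by simp
    also have "\<dots> = p * q - 1" using False p1 by (cases p) (auto simp: algebra_simps)
    also have "\<dots> \<le> n - 1" using q_def by (simp add: diff_le_mono)
    finally show ?thesis .
  qed
qed

lemma kappa_ge:
  assumes "p \<ge> 3"
  shows "real p - 1 \<le> (real p - 2) * kappa p"
proof -
  have p3: "real p \<ge> 3" using assms by simp
  then have "ln (real p) \<le> real p - 1" and "ln (real p) > 0"
    using ln_le_minus_one by simp_all
  then have "1 \<le> (real p - 1) / ln (real p)" by simp
  moreover have "(real p - 2) * kappa p = (real p - 2) + (real p - 1) / ln (real p)"
    using p3 by (simp add: kappa_def distrib_left)
  ultimately show ?thesis by linarith
qed

lemma le_kappa_mult: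
  assumes "p \<ge> 3" and "y \<ge> 0" and "(real p - 2) * x \<le> (real p - 1) * y"
  shows "x \<le> kappa p * y"
proof -
  have "(real p - 1) * y \<le> (real p - 2) * kappa p * y"
    using kappa_ge[OF assms(1)] assms(2) by (rule mult_right_mono)
  then have "(real p - 2) * x \<le> (real p - 2) * (kappa p * y)"
    using assms(3) by (simp add: mult.assoc)
  then show ?thesis using assms(1) by simp
qed

lemma kappa_pos:
  assumes "p \<ge> 3"
  shows "kappa p > 0"
proof -
  have "real p \<ge> 3" using assms by simp
  then have "(real p - 2) * kappa p > 0" using kappa_ge[OF assms] by linarith
  then show ?thesis using \<open>real p \<ge> 3\<close> by (simp add: zero_less_mult_iff)
qed

lemma np_slope_le_m1_length_le:
  assumes "np_slope_le_m1_length v G M" and "fps_nth G j \<noteq> 0"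
  shows "v (fps_nth G M) + int M \<le> v (fps_nth G j) + int j"
  using assms unfolding np_slope_le_m1_length_def by blast

theorem mainTheorem9:
  fixes p :: nat and G :: "'a::field fps" and v :: "'a \<Rightarrow> int" and M i :: nat
  assumes "prime p" and "p \<ge> 3"
    and "np_slope_le_m1_length v G M"
    and "M > 1"
    and "i \<le> M"
    and "fps_nth G i \<noteq> 0"
    and "v (fps_nth G i) \<le> v (fps_nth G M) + vfact_quot p M i"
  shows "real i \<ge> real M / kappa p"
proof -
  define m where "m = multiplicity p (fact M :: nat)"
  have "real ((p - 1) * m) \<le> real (M - 1)"
    using multiplicity_fact_le[OF assms(1)] assms(4) unfolding m_def
    by (simp only: of_nat_le_iff less_imp_le)
  then have legendre: "(real p - 1) * real m \<le> real M - 1"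
    using assms(2,4) by (simp add: of_nat_diff)
  have "real M - real i \<le> real m"
    using np_slope_le_m1_length_le[OF assms(3,6)] assms(7)
    unfolding vfact_quot_def m_def by linarith
  then have "(real p - 1) * (real M - real i) \<le> (real p - 1) * real m"
    using assms(2) by (intro mult_left_mono) auto
  also note legendre
  finally have "(real p - 1) * (real M - real i) \<le> real M - 1" .
  then have "(real p - 2) * real M \<le> (real p - 1) * real i"
    by (simp add: algebra_simps)
  then have "real M \<le> kappa p * real i"
    using assms(2) by (intro le_kappa_mult) auto
  then show ?thesis
    using kappa_pos[OF assms(2)] by (simp add: divide_le_eq mult.commute)
qed

end
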